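(* For real $0\le x<1$, $$ \begin{aligned} \mathcal C_2\left(\tfrac x2\right)&=\left(2\cos\tfrac{\pi x}{2}\right)^{\frac x2}\exp\left(\frac1{2\pi}\sum_{n=1}^\infty \frac{(-1)^n\sin(\pi nx)}{n^{2}}\right), \\ \mathcal C_3\left(\tfrac x2\right)&=\left(2\cos\tfrac{\pi x}{2}\right)^{(\frac x2)^2}\exp\biggl(\frac1{2\pi^2}\sum_{n=1}^\infty \frac{(-1)^n\cos(\pi nx)}{n^{3}} +\frac x{2\pi}\sum_{n=1}^\infty \frac{(-1)^n\sin(\pi nx)}{n^{2}}+\frac1{2\pi^2}\zeta_E(3)\biggr),\\ \mathcal C_4\left(\tfrac x2\right)&=\left(2\cos\tfrac{\pi x}{2}\right)^{(\frac x2)^3}\exp\biggl(\frac{3x}{4\pi^2}\sum_{n=1}^\infty \frac{(-1)^n\cos(\pi nx)}{n^{3}} -\frac 3{4\pi^3}\sum_{n=1}^\infty \frac{(-1)^n\sin(\pi nx)}{n^{4}}+\frac{3x^2}{8\pi}\sum_{n=1}^\infty \frac{(-1)^n\sin(\pi nx)}{n^{2}}\biggr), \\ \mathcal C_5\left(\tfrac x2\right)&=\left(2\cos\tfrac{\pi x}{2}\right)^{(\frac x2)^4}\exp\biggl(-\frac{3}{2\pi^4}\sum_{n=1}^\infty \frac{(-1)^n\cos(\pi nx)}{n^{5}} +\frac{3x^2}{4\pi^2}\sum_{n=1}^\infty \frac{(-1)^n\cos(\pi nx)}{n^{3}}-\frac{3x}{2\pi^3}\sum_{n=1}^\infty \frac{(-1)^n\sin(\pi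 nx)}{n^{4}} \\ &\qquad+\frac{x^3}{4\pi}\sum_{n=1}^\infty \frac{(-1)^n\sin(\pi nx)}{n^{2}}-\frac3{2\pi^4}\zeta_E(5) \biggr). \end{aligned} $$
   Context: For an integer $r\ge2$ let $P_r(y)=(1-y)\exp\left(y+\frac{y^2}{2}+\cdots+\frac{y^r}{r}\right)$. For real $|x|<\tfrac12$, the Kurokawa–Koyama multiple cosine function of order $r$ is the convergent positive product $\mathcal C_r(x)=\prod_{n\ge1,\ n\text{ odd}}\left\{P_r\left(\frac{x}{n/2}\right)P_r\left(-\frac{x}{n/2}\right)^{(-1)^{r-1}}\right\}^{(n/2)^{r-1}}$. $\zeta_E(s)=\sum_{n=1}^\infty\frac{(-1)^{n+1}}{n^s}$. *)

theory Defs
  imports "HOL-Analysis.Analysis"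
begin

definition P :: "nat \<Rightarrow> real \<Rightarrow> real" where
  "P r y = (1 - y) * exp (\<Sum>k=1..r. y ^ k / real k)"

definition mcos :: "nat \<Rightarrow> real \<Rightarrow> real" where
  "mcos r x = (\<Prod>k. (let h = (2 * real k + 1) / 2 in
      (P r (x / h) * P r (- x / h) powi ((-1) ^ (r - 1))) powr (h ^ (r - 1))))"

definition zetaE :: "real \<Rightarrow> real" where
  "zetaE s = (\<Sum>n. (-1) ^ n / (real (Suc n)) powr s)"

end

theory Submission
  imports Defs
begin

text \<open>Taking logarithms, \<open>log C\<^sub>r(x/2) = F\<^sub>r(x)\<close> is a series over the factors
  \<open>h = (2k+1)/2\<close> of the product. Differentiating termwise gives \<open>F\<^sub>r(0) = 0\<close> and
  \<open>F\<^sub>r'(x) = (x/2)\<^sup>r\<^sup>-\<^sup>1 \<Sum>\<^sub>k -2x/((2k+1)\<^sup>2 - x\<^sup>2) = -(\<pi>/2) (x/2)\<^sup>r\<^sup>-\<^sup>1 tan(\<pi>x/2)\<close>, the last step being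
  the partial fraction expansion of \<open>tan\<close> obtained by differentiating the Euler product of
  \<open>cos(\<pi>x/2)\<close>. The right-hand sides have the same derivative, because the Fourier series satisfy
  \<open>C\<^sub>k\<^sub>+\<^sub>1' = -\<pi> S\<^sub>k\<close>, \<open>S\<^sub>k\<^sub>+\<^sub>1' = \<pi> C\<^sub>k\<close> and \<open>S\<^sub>2' = -\<pi> log(2 cos(\<pi>x/2))\<close>, and they vanish at \<open>x = 0\<close>,
  where \<open>C\<^sub>k(0) = -\<zeta>\<^sub>E(k)\<close> cancels the explicit zeta terms.\<close>

section \<open>Termwise differentiation\<close>

lemma summable_bounded_over_Suc_power:
  fixes a :: "nat \<Rightarrow> real"
  assumes "\<And>n. \<bar>a n\<bar> \<le> c" and "k \<ge> 2"
  shows "summable (\<lambda>n. a n / real (Suc n) ^ k)"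
proof (rule summable_comparison_test')
  have "summable (\<lambda>n. inverse (real (Suc n) ^ k))"
    using summable_ignore_initial_segment[OF inverse_power_summable[OF assms(2)], of 1] by simp
  then have "summable (\<lambda>n. c * inverse (real (Suc n) ^ k))" by (rule summable_mult)
  then show "summable (\<lambda>n. c / real (Suc n) ^ k)" by (simp add: field_simps)
  show "norm (a n / real (Suc n) ^ k) \<le> c / real (Suc n) ^ k" for n
    using assms(1)[of n] by (simp add: abs_divide divide_right_mono)
qed

lemma has_field_derivative_series_Mtest:
  fixes f f' :: "nat \<Rightarrow> real \<Rightarrow> real"
  assumes "convex U" "open U" "x0 \<in> U" "summable (\<lambda>n. f n x0)"
    and deriv: "\<And>n y. y \<in> U \<Longrightarrow> (f n has_field_derivative f' n y) (at y)"
    and bound: "\<And>n y. y \<in> U \<Longrightarrow> \<bar>f' n y\<bar> \<le> M n" and "summable M" and "x \<in> U"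
  shows "summable (\<lambda>n. f n x)"
    and "((\<lambda>y. \<Sum>n. f n y) has_field_derivative (\<Sum>n. f' n x)) (at x)"
proof -
  have "uniformly_convergent_on U (\<lambda>n y. \<Sum>i<n. f' i y)"
    by (rule Weierstrass_m_test'[OF _ \<open>summable M\<close>]) (use bound in auto)
  moreover have "x \<in> interior U" using assms by (simp add: interior_open)
  ultimately show "summable (\<lambda>n. f n x)"
      "((\<lambda>y. \<Sum>n. f n y) has_field_derivative (\<Sum>n. f' n x)) (at x)"
    using has_field_derivative_series'[of U f f' x0 x] assms(1,3,4)
      deriv[THEN has_field_derivative_at_within] by auto
qed

lemma has_field_derivative_sequence:
  fixes f f' :: "nat \<Rightarrow> 'a :: {real_normed_field, banach} \<Rightarrow> 'a"
  assumes "convex S" "open S"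
    and deriv: "\<And>n y. y \<in> S \<Longrightarrow> (f n has_field_derivative f' n y) (at y)"
    and unif: "uniform_limit S f' g' sequentially"
    and lim: "\<And>y. y \<in> S \<Longrightarrow> (\<lambda>n. f n y) \<longlonglongrightarrow> g y" and "x \<in> S"
  shows "(g has_field_derivative g' x) (at x)"
proof -
  have derivative_within: "((f n) has_derivative (*) (f' n y)) (at y within S)" if "y \<in> S" for n y
    using deriv[OF that] by (simp add: has_field_derivative_def has_derivative_at_withinI)
  have close: "\<forall>\<^sub>F n in sequentially. \<forall>y\<in>S. \<forall>h. norm (f' n y * h - g' y * h) \<le> e * norm h"
    if "e > 0" for e
  proof -
    have "\<forall>\<^sub>F n in sequentially. \<forall>y\<in>S. norm (f' n y - g' y) \<le> e"
      using uniform_limitD[OF unif \<open>e > 0\<close>] by eventually_elim (auto simp: dist_norm less_imp_le)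
    then show ?thesis
      by eventually_elim (auto simp: norm_mult left_diff_distrib[symmetric] intro!: mult_right_mono)
  qed
  then obtain g0 where g0: "\<And>y. y \<in> S \<Longrightarrow> (\<lambda>n. f n y) \<longlonglongrightarrow> g0 y \<and> (g0 has_derivative (*) (g' y)) (at y within S)"
    using has_derivative_sequence[where g' = "\<lambda>y. (*) (g' y)",
        OF \<open>convex S\<close> derivative_within close \<open>x \<in> S\<close> lim[OF \<open>x \<in> S\<close>]] by blast
  have "(g0 has_field_derivative g' x) (at x)"
    using g0[OF \<open>x \<in> S\<close>] at_within_open[OF \<open>x \<in> S\<close> \<open>open S\<close>]
    by (simp add: has_field_derivative_def mult.commute)
  moreover have "g0 y = g y" if "y \<in> S" for y
    using g0[OF that] lim[OF that] LIMSEQ_unique by blast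
  ultimately show ?thesis
    by (rule has_field_derivative_transform_within_open[OF _ \<open>open S\<close> \<open>x \<in> S\<close>]) simp
qed

lemma eq_on_unit_interval_if_same_deriv:
  fixes f g D :: "real \<Rightarrow> real"
  assumes "\<And>y. \<bar>y\<bar> < 1 \<Longrightarrow> (f has_field_derivative D y) (at y)"
    and "\<And>y. \<bar>y\<bar> < 1 \<Longrightarrow> (g has_field_derivative D y) (at y)"
    and "f 0 = g 0" "\<bar>x\<bar> < 1"
  shows "f x = g x"
proof -
  have "((\<lambda>y. f y - g y) has_field_derivative 0) (at y)" if "\<bar>y\<bar> < 1" for y
    using DERIV_diff[OF assms(1,2)[OF that]] by simp
  then have "f x - g x = f 0 - g 0"
    using assms(4) by (intro DERIV_isconst3[of "-1" 1 x 0 "\<lambda>y. f y - g y"]) (auto simp: abs_less_iff)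
  then show ?thesis using assms(3) by simp
qed

section \<open>Alternating Fourier series\<close>

definition alt_sin_series :: "nat \<Rightarrow> real \<Rightarrow> real" where
  "alt_sin_series k x = (\<Sum>n. (-1) ^ Suc n * sin (pi * real (Suc n) * x) / real (Suc n) ^ k)"

definition alt_cos_series :: "nat \<Rightarrow> real \<Rightarrow> real" where
  "alt_cos_series k x = (\<Sum>n. (-1) ^ Suc n * cos (pi * real (Suc n) * x) / real (Suc n) ^ k)"

lemma summable_alt_sin_series:
  "k \<ge> 2 \<Longrightarrow> summable (\<lambda>n. (-1) ^ Suc n * sin (pi * real (Suc n) * x) / real (Suc n) ^ k)"
  by (rule summable_bounded_over_Suc_power[where c = 1]) (auto simp: abs_mult)

lemma summable_alt_cos_series:
  "k \<ge> 2 \<Longrightarrow> summable (\<lambda>n. (-1) ^ Suc n * cos (pi * real (Suc n) * x) / real (Suc n) ^ k)"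
  by (rule summable_bounded_over_Suc_power[where c = 1]) (auto simp: abs_mult)

lemma alt_cos_series_deriv:
  assumes "k \<ge> 2"
  shows "(alt_cos_series (Suc k) has_field_derivative - pi * alt_sin_series k x) (at x)"
proof -
  define f' where "f' n y = - pi * ((-1) ^ Suc n * sin (pi * real (Suc n) * y) / real (Suc n) ^ k)"
    for n y
  have term_deriv: "((\<lambda>y. (-1) ^ Suc n * cos (pi * real (Suc n) * y) / real (Suc n) ^ Suc k)
      has_field_derivative f' n y) (at y)" for n y
    unfolding f'_def
    by (rule derivative_eq_intros refl | simp add: field_simps del: of_nat_Suc)+
  have term_bound: "\<bar>f' n y\<bar> \<le> pi / real (Suc n) ^ k" for n y
    by (simp add: f'_def abs_mult abs_divide divide_right_mono)
  have bound_summable: "summable (\<lambda>n. pi / real (Suc n) ^ k)"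
    using summable_bounded_over_Suc_power[of "\<lambda>_. pi" pi k] assms by simp
  have "(alt_cos_series (Suc k) has_field_derivative (\<Sum>n. f' n x)) (at x)"
    using has_field_derivative_series_Mtest(2)[OF convex_UNIV open_UNIV UNIV_I
        summable_alt_cos_series[OF le_SucI[OF assms]] term_deriv term_bound bound_summable UNIV_I]
    unfolding alt_cos_series_def[abs_def] by simp
  moreover have "(\<Sum>n. f' n x) = - pi * alt_sin_series k x"
    unfolding f'_def alt_sin_series_def by (rule suminf_mult[OF summable_alt_sin_series[OF assms]])
  ultimately show ?thesis by simp
qed

lemma alt_sin_series_deriv:
  assumes "k \<ge> 2"
  shows "(alt_sin_series (Suc k) has_field_derivative pi * alt_cos_series k x) (at x)"
proof -
  define f' where "f' n y = pi * ((-1) ^ Suc n * cos (pi * real (Suc n) * y) / real (Suc n) ^ k)"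
    for n y
  have term_deriv: "((\<lambda>y. (-1) ^ Suc n * sin (pi * real (Suc n) * y) / real (Suc n) ^ Suc k)
      has_field_derivative f' n y) (at y)" for n y
    unfolding f'_def
    by (rule derivative_eq_intros refl | simp add: field_simps del: of_nat_Suc)+
  have term_bound: "\<bar>f' n y\<bar> \<le> pi / real (Suc n) ^ k" for n y
    by (simp add: f'_def abs_mult abs_divide divide_right_mono)
  have bound_summable: "summable (\<lambda>n. pi / real (Suc n) ^ k)"
    using summable_bounded_over_Suc_power[of "\<lambda>_. pi" pi k] assms by simp
  have "(alt_sin_series (Suc k) has_field_derivative (\<Sum>n. f' n x)) (at x)"
    using has_field_derivative_series_Mtest(2)[OF convex_UNIV open_UNIV UNIV_I
        summable_alt_sin_series[OF le_SucI[OF assms]] term_deriv term_bound bound_summable UNIV_I]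
    unfolding alt_sin_series_def[abs_def] by simp
  moreover have "(\<Sum>n. f' n x) = pi * alt_cos_series k x"
    unfolding f'_def alt_cos_series_def by (rule suminf_mult[OF summable_alt_cos_series[OF assms]])
  ultimately show ?thesis by simp
qed

lemma alt_sin_series_zero: "alt_sin_series k 0 = 0"
  by (simp add: alt_sin_series_def)

lemma alt_cos_series_zero:
  assumes "k \<ge> 2"
  shows "alt_cos_series k 0 = - zetaE (real k)"
proof -
  have "alt_cos_series k 0 = (\<Sum>n. - ((-1) ^ n / real (Suc n) ^ k))"
    by (simp add: alt_cos_series_def)
  also have "\<dots> = - (\<Sum>n. (-1) ^ n / real (Suc n) ^ k)"
    by (rule suminf_minus[OF summable_bounded_over_Suc_power[OF _ assms, where c = 1]]) simp
  finally show ?thesis by (simp add: zetaE_def powr_realpow)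
qed

lemma cos_pi_half_pos:
  assumes "\<bar>x\<bar> < 1"
  shows "cos (pi * x / 2) > 0"
proof (rule cos_gt_zero_pi)
  have "pi * -1 < pi * x" "pi * x < pi * 1"
    using assms by (intro mult_strict_left_mono; simp add: abs_less_iff)+
  then show "- (pi / 2) < pi * x / 2" "pi * x / 2 < pi / 2" by simp_all
qed

lemma cos_pi_half_antimono:
  assumes "\<bar>x\<bar> \<le> a" "a \<le> 1"
  shows "cos (pi * a / 2) \<le> cos (pi * x / 2)"
proof -
  have "cos (pi * a / 2) \<le> cos (pi * \<bar>x\<bar> / 2)"
    using assms by (intro cos_monotone_0_pi_le) auto
  also have "cos (pi * \<bar>x\<bar> / 2) = cos \<bar>pi * x / 2\<bar>" by (simp add: abs_mult)
  finally show ?thesis by (simp only: cos_abs_real)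
qed

definition damped_alt_sin_series :: "real \<Rightarrow> real \<Rightarrow> real" where
  "damped_alt_sin_series \<rho> x =
     (\<Sum>n. (-1) ^ Suc n * \<rho> ^ Suc n * sin (pi * real (Suc n) * x) / real (Suc n) ^ 2)"

lemma sums_damped_alt_cos_series:
  fixes \<rho> x :: real assumes "0 \<le> \<rho>" "\<rho> < 1"
  shows "(\<lambda>n. (-1) ^ Suc n * \<rho> ^ Suc n * cos (pi * real (Suc n) * x) / real (Suc n))
           sums (- ln (cmod (1 + complex_of_real \<rho> * cis (pi * x))))"
proof -
  define z where "z = complex_of_real \<rho> * cis (pi * x)"
  have "cmod z < 1" using assms by (simp add: z_def norm_mult)
  define f where "f n = - ((-z) ^ n) / of_nat n" for n
  have "f sums ln (1 + z)" unfolding f_def by (rule Ln_series'[OF \<open>cmod z < 1\<close>])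
  moreover have "f 0 = 0" by (simp add: f_def)
  ultimately have "(\<lambda>n. f (Suc n)) sums ln (1 + z)" using sums_Suc_iff[of f] by simp
  then have "(\<lambda>n. - Re (f (Suc n))) sums (- Re (ln (1 + z)))" by (intro sums_minus sums_Re)
  moreover have "1 + z \<noteq> 0"
    using \<open>cmod z < 1\<close> by (metis add.inverse_unique norm_minus_cancel norm_one less_irrefl)
  moreover have "- Re (f (Suc n)) =
      (-1) ^ Suc n * \<rho> ^ Suc n * cos (pi * real (Suc n) * x) / real (Suc n)" for n
  proof -
    have "(-z) ^ m = complex_of_real ((-1) ^ m * \<rho> ^ m) * cis (real m * (pi * x))" for m
      by (simp add: z_def power_minus' power_mult_distrib Complex.DeMoivre)
    from this[of "Suc n"] show ?thesis by (simp add: f_def Re_divide_of_nat mult_ac del: of_nat_Suc power_Suc)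
  qed
  ultimately show ?thesis unfolding z_def by simp
qed

lemma damped_alt_sin_series_deriv:
  fixes \<rho> x :: real assumes "0 \<le> \<rho>" "\<rho> < 1"
  shows "(damped_alt_sin_series \<rho> has_field_derivative
          - pi * ln (cmod (1 + complex_of_real \<rho> * cis (pi * x)))) (at x)"
proof -
  define f' where "f' n y = pi * ((-1) ^ Suc n * \<rho> ^ Suc n * cos (pi * real (Suc n) * y) / real (Suc n))"
    for n y
  have term_deriv: "((\<lambda>y. (-1) ^ Suc n * \<rho> ^ Suc n * sin (pi * real (Suc n) * y) / real (Suc n) ^ 2)
      has_field_derivative f' n y) (at y)" for n y
    unfolding f'_def
    by (rule derivative_eq_intros refl | simp add: field_simps power2_eq_square del: of_nat_Suc)+
  have term_bound: "\<bar>f' n y\<bar> \<le> pi * \<rho> ^ Suc n" for n y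
  proof -
    have "\<bar>cos (pi * real (Suc n) * y)\<bar> \<le> real (Suc n)"
      using abs_cos_le_one[of "pi * real (Suc n) * y"] by linarith
    then have "\<bar>cos (pi * real (Suc n) * y)\<bar> / real (Suc n) \<le> 1" by simp
    then have "pi * \<rho> ^ Suc n * (\<bar>cos (pi * real (Suc n) * y)\<bar> / real (Suc n)) \<le> pi * \<rho> ^ Suc n"
      using assms by (intro mult_left_le) auto
    then show ?thesis using assms by (simp add: f'_def abs_mult abs_divide power_abs)
  qed
  have bound_summable: "summable (\<lambda>n. pi * \<rho> ^ Suc n)"
    using assms by (intro summable_mult summable_Suc_iff[THEN iffD2] summable_geometric) auto
  have "summable (\<lambda>n. (-1) ^ Suc n * \<rho> ^ Suc n * sin (pi * real (Suc n) * 0) / real (Suc n) ^ 2)"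
    by simp
  from has_field_derivative_series_Mtest(2)[OF convex_UNIV open_UNIV UNIV_I this
        term_deriv term_bound bound_summable UNIV_I]
  have "(damped_alt_sin_series \<rho> has_field_derivative (\<Sum>n. f' n x)) (at x)"
    unfolding damped_alt_sin_series_def[abs_def] by simp
  moreover have "(\<Sum>n. f' n x) = - pi * ln (cmod (1 + complex_of_real \<rho> * cis (pi * x)))"
    unfolding f'_def using sums_unique[OF sums_mult[OF sums_damped_alt_cos_series[OF assms], of pi]]
    by simp
  ultimately show ?thesis by simp
qed

lemma continuous_on_damped_alt_sin_series:
  "continuous_on {0..1} (\<lambda>\<rho>. damped_alt_sin_series \<rho> x)"
proof -
  define T where "T n \<rho> = (-1) ^ Suc n * \<rho> ^ Suc n * sin (pi * real (Suc n) * x) / real (Suc n) ^ 2"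
    for n \<rho>
  have "norm (T n \<rho>) \<le> 1 / real (Suc n) ^ 2" if "\<rho> \<in> {0..1}" for n \<rho>
    using that by (simp add: T_def abs_mult abs_divide power_abs divide_right_mono
        mult_le_one power_le_one)
  then have "uniform_limit {0..1} (\<lambda>N \<rho>. \<Sum>n<N. T n \<rho>) (\<lambda>\<rho>. \<Sum>n. T n \<rho>) sequentially"
    by (rule Weierstrass_m_test[OF _ summable_bounded_over_Suc_power[where c = 1]]) auto
  then show ?thesis
    unfolding damped_alt_sin_series_def T_def[symmetric]
    by (rule uniform_limit_theorem[rotated])
      (auto simp: T_def intro!: continuous_intros always_eventually)
qed

lemma norm_one_plus_cis:
  assumes "\<bar>t\<bar> < pi"
  shows "cmod (1 + cis t) = 2 * cos (t / 2)"
proof -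
  have "cos (t / 2) > 0" using assms by (intro cos_gt_zero_pi) auto
  have "cmod (1 + cis t) ^ 2 = (1 + cos t) ^ 2 + (sin t) ^ 2" by (simp add: cmod_power2)
  also have "\<dots> = 2 + 2 * cos t" by (simp add: power2_eq_square algebra_simps sin_squared_eq)
  also have "cos t = 2 * cos (t / 2) ^ 2 - 1" using cos_double_cos[of "t / 2"] by simp
  finally have "cmod (1 + cis t) ^ 2 = (2 * cos (t / 2)) ^ 2" by (simp add: power2_eq_square)
  then show ?thesis by (rule power2_eq_imp_eq) (use \<open>cos (t / 2) > 0\<close> in auto)
qed

lemma abs_ln_diff_le:
  fixes u v c :: real assumes "c > 0" "u \<ge> c" "v \<ge> c"
  shows "\<bar>ln u - ln v\<bar> \<le> \<bar>u - v\<bar> / c"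
proof -
  have "ln u - ln v \<le> \<bar>u - v\<bar> / c" if "u \<ge> c" "v \<ge> c" for u v
  proof -
    have "ln u - ln v = ln (u / v)" using that \<open>c > 0\<close> by (simp add: ln_div)
    also have "\<dots> \<le> u / v - 1" using that \<open>c > 0\<close> by (intro ln_le_minus_one) auto
    also have "\<dots> = (u - v) / v" using that \<open>c > 0\<close> by (simp add: field_simps)
    also have "\<dots> \<le> \<bar>u - v\<bar> / c" using that \<open>c > 0\<close> by (intro frac_le) auto
    finally show ?thesis .
  qed
  from this[of u v] this[of v u] show ?thesis using assms by (auto simp: abs_minus_commute)
qed

lemma ln_norm_one_plus_cis_approx:
  fixes \<rho> t c :: real
  assumes "0 \<le> \<rho>" "\<rho> \<le> 1" "\<bar>t\<bar> < pi" "0 < c" "c \<le> cos (t / 2)" "1 - \<rho> \<le> c"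
  shows "\<bar>ln (cmod (1 + complex_of_real \<rho> * cis t)) - ln (2 * cos (t / 2))\<bar> \<le> (1 - \<rho>) / c"
proof -
  define u where "u = cmod (1 + complex_of_real \<rho> * cis t)"
  have "\<bar>u - cmod (1 + cis t)\<bar> \<le> cmod ((1 + complex_of_real \<rho> * cis t) - (1 + cis t))"
    unfolding u_def by (rule norm_triangle_ineq3)
  also have "(1 + complex_of_real \<rho> * cis t) - (1 + cis t) = complex_of_real (\<rho> - 1) * cis t"
    by (simp add: algebra_simps)
  also have "cmod (complex_of_real (\<rho> - 1) * cis t) = 1 - \<rho>"
    using assms by (simp only: norm_mult norm_of_real norm_cis mult_1_right)
  finally have "\<bar>u - 2 * cos (t / 2)\<bar> \<le> 1 - \<rho>"
    by (simp only: norm_one_plus_cis[OF assms(3)])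
  then have "\<bar>ln u - ln (2 * cos (t / 2))\<bar> \<le> \<bar>u - 2 * cos (t / 2)\<bar> / c"
    using assms by (intro abs_ln_diff_le) auto
  also have "\<dots> \<le> (1 - \<rho>) / c"
    using \<open>\<bar>u - 2 * cos (t / 2)\<bar> \<le> 1 - \<rho>\<close> assms by (intro divide_right_mono) auto
  finally show ?thesis unfolding u_def .
qed

lemma uniform_limit_ln_norm_one_plus_cis:
  fixes a :: real and \<rho> :: "nat \<Rightarrow> real"
  assumes "\<bar>a\<bar> < 1" and "\<And>k. 0 \<le> \<rho> k" "\<And>k. \<rho> k \<le> 1" and "\<rho> \<longlonglongrightarrow> 1"
  shows "uniform_limit {-a<..<a} (\<lambda>k y. ln (cmod (1 + complex_of_real (\<rho> k) * cis (pi * y))))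
           (\<lambda>y. ln (2 * cos (pi * y / 2))) sequentially"
proof (rule uniform_limitI)
  fix e :: real assume "e > 0"
  define c where "c = cos (pi * a / 2)"
  have "c > 0" unfolding c_def by (rule cos_pi_half_pos[OF assms(1)])
  have "\<forall>\<^sub>F k in sequentially. 1 - min c (e * c) < \<rho> k"
    using \<open>c > 0\<close> \<open>e > 0\<close> by (intro order_tendstoD(1)[OF assms(4)]) simp
  then show "\<forall>\<^sub>F k in sequentially. \<forall>y\<in>{-a<..<a}.
      dist (ln (cmod (1 + complex_of_real (\<rho> k) * cis (pi * y)))) (ln (2 * cos (pi * y / 2))) < e"
  proof (rule eventually_mono, intro ballI)
    fix k y assume k: "1 - min c (e * c) < \<rho> k" and "y \<in> {-a<..<a}"
    then have "\<bar>pi * y\<bar> < pi" "c \<le> cos (pi * y / 2)"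
      using assms(1) by (auto simp: c_def abs_mult intro!: cos_pi_half_antimono)
    then have "\<bar>ln (cmod (1 + complex_of_real (\<rho> k) * cis (pi * y))) - ln (2 * cos (pi * y / 2))\<bar>
        \<le> (1 - \<rho> k) / c"
      using k \<open>c > 0\<close> assms(2,3) by (intro ln_norm_one_plus_cis_approx) auto
    also have "\<dots> < e"
      using k \<open>c > 0\<close> by (simp add: field_simps)
    finally show "dist (ln (cmod (1 + complex_of_real (\<rho> k) * cis (pi * y))))
        (ln (2 * cos (pi * y / 2))) < e"
      by (simp add: dist_real_def)
  qed
qed

text \<open>The termwise derivative \<open>\<pi> \<Sum> (-1)\<^sup>n\<^sup>+\<^sup>1 cos(\<pi>nx)/n\<close> converges only conditionally, so
  we differentiate the Abel-damped series instead: for \<open>\<rho> < 1\<close> its derivative is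
  \<open>-\<pi> log \<bar>1 + \<rho> e\<^sup>i\<^sup>\<pi>\<^sup>x\<bar>\<close>, which tends to \<open>-\<pi> log(2 cos(\<pi>x/2))\<close> uniformly on compact subintervals.\<close>

lemma alt_sin_series_2_deriv:
  assumes "\<bar>x\<bar> < 1"
  shows "(alt_sin_series 2 has_field_derivative - pi * ln (2 * cos (pi * x / 2))) (at x)"
proof -
  define a where "a = (1 + \<bar>x\<bar>) / 2"
  define \<rho> where "\<rho> k = 1 - inverse (real (Suc k))" for k
  have "\<bar>a\<bar> < 1" "x \<in> {-a<..<a}" using assms by (auto simp: a_def abs_if field_simps)
  have \<rho>: "0 \<le> \<rho> k" "\<rho> k < 1" for k by (auto simp: \<rho>_def field_simps)
  have "\<rho> \<longlonglongrightarrow> 1"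
    using LIMSEQ_inverse_real_of_nat_add_minus[of 1] unfolding \<rho>_def by simp
  have "uniform_limit {-a<..<a} (\<lambda>k y. - pi * ln (cmod (1 + complex_of_real (\<rho> k) * cis (pi * y))))
      (\<lambda>y. - pi * ln (2 * cos (pi * y / 2))) sequentially"
    using \<rho> \<open>\<bar>a\<bar> < 1\<close> \<open>\<rho> \<longlonglongrightarrow> 1\<close>
    by (intro bounded_linear.uniform_limit[OF bounded_linear_mult_right]
        uniform_limit_ln_norm_one_plus_cis) (auto simp: less_imp_le)
  moreover have "(\<lambda>k. damped_alt_sin_series (\<rho> k) y) \<longlonglongrightarrow> alt_sin_series 2 y" for y
    using continuous_on_tendsto_compose[OF continuous_on_damped_alt_sin_series \<open>\<rho> \<longlonglongrightarrow> 1\<close>] \<rho>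
    by (simp add: less_imp_le damped_alt_sin_series_def alt_sin_series_def)
  ultimately show ?thesis
    using damped_alt_sin_series_deriv[OF \<rho>] \<open>x \<in> {-a<..<a}\<close>
    by (intro has_field_derivative_sequence[where S = "{-a<..<a}"]) auto
qed

section \<open>The Euler product of the cosine\<close>

lemma prod_atLeast1_double:
  fixes g :: "nat \<Rightarrow> 'a :: comm_monoid_mult"
  shows "(\<Prod>k=1..2*N. g k) = (\<Prod>k=1..N. g (2 * k)) * (\<Prod>j<N. g (2 * j + 1))"
proof (induction N)
  case (Suc N)
  have "2 * Suc N = Suc (Suc (2 * N))" by simp
  then show ?case using Suc by (simp add: prod.cl_ivl_Suc mult_ac)
qed simp

lemma cos_product_odd:
  fixes x :: real assumes "\<bar>x\<bar> < 1"
  shows "(\<lambda>N. \<Prod>j<N. 1 - x\<^sup>2 / (2 * real j + 1)\<^sup>2) \<longlonglongrightarrow> cos (pi * x / 2)"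
proof (cases "x = 0")
  case False
  define f where "f k = 1 - x\<^sup>2 / real k ^ 2" for k
  define E where "E N = (\<Prod>k=1..N. f (2 * k))" for N
  have E_eq: "E N = (\<Prod>k=1..N. 1 - (x / 2)\<^sup>2 / real k ^ 2)" for N
    by (simp add: E_def f_def power_divide power_mult_distrib)
  have "E N > 0" for N
  proof -
    have "(x / 2)\<^sup>2 / real k ^ 2 < 1" if "k \<ge> 1" for k
    proof -
      have "(x / 2)\<^sup>2 < 1" using assms by (simp add: abs_square_less_1)
      also have "1 \<le> real k ^ 2" using that by simp
      finally show ?thesis using that by (simp add: field_simps)
    qed
    then show ?thesis unfolding E_eq by (intro prod_pos) auto
  qed
  have "(\<lambda>N. \<Prod>k=1..2*N. f k) \<longlonglongrightarrow> sin (pi * x) / (pi * x)"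
    using LIMSEQ_subseq_LIMSEQ[OF sin_product_formula_real'[OF False], of "(*) 2"]
    by (simp add: f_def strict_mono_def o_def)
  moreover have "E \<longlonglongrightarrow> sin (pi * (x / 2)) / (pi * (x / 2))"
    unfolding E_eq using False by (intro sin_product_formula_real') simp
  moreover have "sin (pi * (x / 2)) \<noteq> 0"
  proof
    assume "sin (pi * (x / 2)) = 0"
    moreover have "\<bar>pi * (x / 2)\<bar> < pi" using assms by (simp add: abs_mult)
    ultimately show False using sin_zero_pi_iff False by auto
  qed
  ultimately have "(\<lambda>N. (\<Prod>k=1..2*N. f k) / E N)
      \<longlonglongrightarrow> (sin (pi * x) / (pi * x)) / (sin (pi * (x / 2)) / (pi * (x / 2)))"
    using False by (intro tendsto_divide) auto
  moreover have "(\<Prod>k=1..2*N. f k) / E N = (\<Prod>j<N. 1 - x\<^sup>2 / (2 * real j + 1)\<^sup>2)" for N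
  proof -
    have "(\<Prod>k=1..2*N. f k) = E N * (\<Prod>j<N. f (2 * j + 1))"
      unfolding E_def by (rule prod_atLeast1_double)
    then show ?thesis using \<open>E N > 0\<close> by (simp add: f_def add.commute)
  qed
  ultimately have "(\<lambda>N. \<Prod>j<N. 1 - x\<^sup>2 / (2 * real j + 1)\<^sup>2)
      \<longlonglongrightarrow> (sin (pi * x) / (pi * x)) / (sin (pi * (x / 2)) / (pi * (x / 2)))"
    by simp
  moreover have "sin (pi * x) = 2 * sin (pi * (x / 2)) * cos (pi * (x / 2))"
    using sin_double[of "pi * (x / 2)"] by simp
  then have "(sin (pi * x) / (pi * x)) / (sin (pi * (x / 2)) / (pi * (x / 2))) = cos (pi * x / 2)"
    using \<open>sin (pi * (x / 2)) \<noteq> 0\<close> False by (simp add: field_simps)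
  ultimately show ?thesis by simp
qed simp

lemma cos_factor_pos:
  fixes x :: real assumes "\<bar>x\<bar> < 1"
  shows "1 - x\<^sup>2 / (2 * real j + 1)\<^sup>2 > 0"
proof -
  have "x\<^sup>2 < 1" using assms by (simp add: abs_square_less_1)
  also have "1 \<le> (2 * real j + 1)\<^sup>2" by simp
  finally show ?thesis by (simp add: field_simps)
qed

lemma sums_ln_cos_factors:
  fixes x :: real assumes "\<bar>x\<bar> < 1"
  shows "(\<lambda>j. ln (1 - x\<^sup>2 / (2 * real j + 1)\<^sup>2)) sums ln (cos (pi * x / 2))"
proof -
  have "(\<lambda>N. ln (\<Prod>j<N. 1 - x\<^sup>2 / (2 * real j + 1)\<^sup>2)) \<longlonglongrightarrow> ln (cos (pi * x / 2))"
    using cos_pi_half_pos[OF assms] by (intro tendsto_ln cos_product_odd assms) simp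
  moreover have "ln (\<Prod>j<N. 1 - x\<^sup>2 / (2 * real j + 1)\<^sup>2) = (\<Sum>j<N. ln (1 - x\<^sup>2 / (2 * real j + 1)\<^sup>2))"
    for N using cos_factor_pos[OF assms] by (intro ln_prod) (auto simp: less_imp_neq[symmetric])
  ultimately show ?thesis unfolding sums_def by simp
qed

lemma ln_cos_factor_deriv:
  fixes x n :: real assumes "\<bar>x\<bar> < n"
  shows "((\<lambda>y. ln (1 - y\<^sup>2 / n\<^sup>2)) has_field_derivative - 2 * x / (n\<^sup>2 - x\<^sup>2)) (at x)"
proof -
  have "x\<^sup>2 < n\<^sup>2" using assms by (intro power2_strict_mono) simp
  have "n \<noteq> 0" using assms by auto
  have "1 - x\<^sup>2 / n\<^sup>2 = (n\<^sup>2 - x\<^sup>2) / n\<^sup>2" "n\<^sup>2 - x\<^sup>2 > 0"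
    using \<open>x\<^sup>2 < n\<^sup>2\<close> \<open>n \<noteq> 0\<close> by (simp_all add: field_simps)
  moreover have "((\<lambda>y. 1 - y\<^sup>2 / n\<^sup>2) has_field_derivative - (2 * x) / n\<^sup>2) (at x)"
    using DERIV_diff[OF DERIV_const DERIV_cdivide[OF DERIV_pow[of 2 x]], of 1 "n\<^sup>2"] by simp
  ultimately have "((\<lambda>y. ln (1 - y\<^sup>2 / n\<^sup>2)) has_field_derivative
      1 / ((n\<^sup>2 - x\<^sup>2) / n\<^sup>2) * (- (2 * x) / n\<^sup>2)) (at x)"
    using DERIV_chain2[OF DERIV_ln_divide] \<open>n \<noteq> 0\<close> by (metis divide_pos_pos zero_less_power2)
  then show ?thesis using \<open>n \<noteq> 0\<close> by simp
qed

lemma ln_cos_factor_deriv_bound: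
  fixes x a n :: real assumes "\<bar>x\<bar> \<le> a" "a < 1" "1 \<le> n"
  shows "\<bar>- 2 * x / (n\<^sup>2 - x\<^sup>2)\<bar> \<le> 2 / (1 - a\<^sup>2) / n\<^sup>2"
proof -
  have "a\<^sup>2 < 1" "x\<^sup>2 \<le> a\<^sup>2" using assms by (auto simp: abs_square_less_1 intro!: power2_mono)
  moreover have "a\<^sup>2 \<le> a\<^sup>2 * n\<^sup>2" using assms by (simp add: mult_le_cancel_left1)
  ultimately have "(1 - a\<^sup>2) * n\<^sup>2 \<le> n\<^sup>2 - x\<^sup>2" "(1 - a\<^sup>2) * n\<^sup>2 > 0"
    using assms by (auto simp: algebra_simps)
  then have "\<bar>- 2 * x / (n\<^sup>2 - x\<^sup>2)\<bar> = 2 * \<bar>x\<bar> / (n\<^sup>2 - x\<^sup>2)"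
    by (simp add: abs_divide abs_mult)
  also have "\<dots> \<le> 2 / (n\<^sup>2 - x\<^sup>2)"
    using \<open>(1 - a\<^sup>2) * n\<^sup>2 \<le> n\<^sup>2 - x\<^sup>2\<close> \<open>(1 - a\<^sup>2) * n\<^sup>2 > 0\<close> assms
    by (intro divide_right_mono) auto
  also have "\<dots> \<le> 2 / ((1 - a\<^sup>2) * n\<^sup>2)"
    using \<open>(1 - a\<^sup>2) * n\<^sup>2 \<le> n\<^sup>2 - x\<^sup>2\<close> \<open>(1 - a\<^sup>2) * n\<^sup>2 > 0\<close>
    by (intro divide_left_mono) auto
  finally show ?thesis by simp
qed

lemma partial_fraction_term_bound:
  fixes x a :: real assumes "\<bar>x\<bar> \<le> a" "a < 1"
  shows "\<bar>- 2 * x / ((2 * real j + 1)\<^sup>2 - x\<^sup>2)\<bar> \<le> 2 / (1 - a\<^sup>2) / real (Suc j) ^ 2"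
proof -
  have "a\<^sup>2 < 1" using assms by (simp add: abs_square_less_1)
  have "\<bar>- 2 * x / ((2 * real j + 1)\<^sup>2 - x\<^sup>2)\<bar> \<le> 2 / (1 - a\<^sup>2) / (2 * real j + 1)\<^sup>2"
    using assms by (intro ln_cos_factor_deriv_bound) auto
  also have "\<dots> \<le> 2 / (1 - a\<^sup>2) / real (Suc j) ^ 2"
    using \<open>a\<^sup>2 < 1\<close> by (intro divide_left_mono power_mono) auto
  finally show ?thesis .
qed

lemma sums_tan_partial_fractions:
  fixes x :: real assumes "\<bar>x\<bar> < 1"
  shows "(\<lambda>j. - 2 * x / ((2 * real j + 1)\<^sup>2 - x\<^sup>2)) sums (- (pi / 2) * tan (pi * x / 2))"
proof -
  define a where "a = (1 + \<bar>x\<bar>) / 2"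
  define U where "U = {-a<..<a}"
  have "a < 1" "x \<in> U" "0 \<in> U" "convex U" "open U"
    using assms by (auto simp: a_def U_def abs_if field_simps)
  have bound: "\<bar>- 2 * y / ((2 * real j + 1)\<^sup>2 - y\<^sup>2)\<bar> \<le> 2 / (1 - a\<^sup>2) / real (Suc j) ^ 2"
    if "y \<in> U" for j y
    using that \<open>a < 1\<close> by (intro partial_fraction_term_bound) (auto simp: U_def)
  have bound_summable: "summable (\<lambda>j. 2 / (1 - a\<^sup>2) / real (Suc j) ^ 2)"
    by (rule summable_bounded_over_Suc_power) auto
  have term_deriv: "((\<lambda>y. ln (1 - y\<^sup>2 / (2 * real j + 1)\<^sup>2)) has_field_derivative
      - 2 * y / ((2 * real j + 1)\<^sup>2 - y\<^sup>2)) (at y)" if "y \<in> U" for j y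
    using that \<open>a < 1\<close> by (intro ln_cos_factor_deriv) (auto simp: U_def)
  have "summable (\<lambda>j. ln (1 - 0\<^sup>2 / (2 * real j + 1)\<^sup>2))" by simp
  from has_field_derivative_series_Mtest(2)[OF \<open>convex U\<close> \<open>open U\<close> \<open>0 \<in> U\<close>
      this term_deriv bound bound_summable \<open>x \<in> U\<close>]
  have "((\<lambda>y. \<Sum>j. ln (1 - y\<^sup>2 / (2 * real j + 1)\<^sup>2)) has_field_derivative
      (\<Sum>j. - 2 * x / ((2 * real j + 1)\<^sup>2 - x\<^sup>2))) (at x)" .
  then have "((\<lambda>y. ln (cos (pi * y / 2))) has_field_derivative
      (\<Sum>j. - 2 * x / ((2 * real j + 1)\<^sup>2 - x\<^sup>2))) (at x)"
  proof (rule has_field_derivative_transform_within_open)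
    show "(\<Sum>j. ln (1 - y\<^sup>2 / (2 * real j + 1)\<^sup>2)) = ln (cos (pi * y / 2))" if "y \<in> U" for y
      using that \<open>a < 1\<close> by (intro sums_unique[symmetric] sums_ln_cos_factors) (auto simp: U_def)
  qed (use \<open>x \<in> U\<close> \<open>open U\<close> in auto)
  moreover have "((\<lambda>y. ln (cos (pi * y / 2))) has_field_derivative - (pi / 2) * tan (pi * x / 2)) (at x)"
    using cos_pi_half_pos[OF assms] by (auto intro!: derivative_eq_intros simp: tan_def mult_ac)
  moreover have "summable (\<lambda>j. - 2 * x / ((2 * real j + 1)\<^sup>2 - x\<^sup>2))"
    using bound[OF \<open>x \<in> U\<close>] by (intro summable_comparison_test'[OF bound_summable]) simp
  ultimately show ?thesis by (simp add: sums_iff DERIV_unique)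
qed

section \<open>The logarithm of the multiple cosine\<close>

definition logP :: "nat \<Rightarrow> real \<Rightarrow> real" where
  "logP r y = ln (1 - y) + (\<Sum>i=1..r. y ^ i / real i)"

lemma ln_P: "y < 1 \<Longrightarrow> ln (P r y) = logP r y"
  by (simp add: P_def logP_def ln_mult)

lemma logP_deriv:
  assumes "y < 1"
  shows "(logP r has_field_derivative - (y ^ r) / (1 - y)) (at y)"
proof (induction r)
  case 0
  show ?case
    unfolding logP_def[abs_def] using assms by (auto intro!: derivative_eq_intros)
next
  case (Suc r)
  have "logP (Suc r) = (\<lambda>y. logP r y + y ^ Suc r / real (Suc r))"
    by (simp add: logP_def fun_eq_iff)
  moreover have "((\<lambda>y. y ^ Suc r / real (Suc r)) has_field_derivative y ^ r) (at y)"
    using DERIV_cdivide[OF DERIV_pow[of "Suc r" y], of "real (Suc r)"] by simp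
  then have "((\<lambda>y. logP r y + y ^ Suc r / real (Suc r)) has_field_derivative
      - (y ^ r) / (1 - y) + y ^ r) (at y)"
    by (rule DERIV_add[OF Suc])
  moreover have "- (y ^ r) / (1 - y) + y ^ r = - (y ^ Suc r) / (1 - y)"
    using assms by (simp add: field_simps)
  ultimately show ?case by simp
qed

text \<open>Since \<open>(-1)\<^sup>q (-u)\<^sup>q\<^sup>+\<^sup>1 = -u\<^sup>q\<^sup>+\<^sup>1\<close>, the derivatives of the two \<open>logP\<close> terms of a factor
  combine to \<open>-u\<^sup>q\<^sup>+\<^sup>1 (1/(1-u) + 1/(1+u)) / n\<close> with \<open>u = x/n\<close>.\<close>

lemma logP_pair_deriv_eq:
  fixes x n :: real and q :: nat
  assumes "0 < n" "\<bar>x\<bar> < n"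
  shows "(n / 2) ^ q * (- ((x / n) ^ Suc q) / (1 - x / n) * (1 / n)
           + (-1) ^ q * (- ((- (x / n)) ^ Suc q) / (1 - - (x / n)) * (- 1 / n)))
         = (x / 2) ^ q * (- 2 * x / (n\<^sup>2 - x\<^sup>2))"
proof -
  have "x\<^sup>2 < n\<^sup>2" using assms by (intro power2_strict_mono) simp
  then have "n - x \<noteq> 0" "n + x \<noteq> 0" "n\<^sup>2 - x\<^sup>2 \<noteq> 0" using assms by (auto simp: abs_less_iff)
  have "(-1) ^ q * (- (x / n)) ^ Suc q = - ((x / n) ^ Suc q)"
    by (simp add: power_minus[of "x / n"] mult.assoc[symmetric] minus_one_mult_self)
  moreover have "s * (- B / (1 - - u) * (- 1 / n)) = s * B / (1 + u) * (1 / n)" for s B u :: real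
    by (simp add: divide_inverse algebra_simps)
  ultimately have odd_part: "(-1) ^ q * (- ((- (x / n)) ^ Suc q) / (1 - - (x / n)) * (- 1 / n))
      = - ((x / n) ^ Suc q) / (1 + x / n) * (1 / n)"
    by simp
  have "c * (- A / (1 - u) * (1 / n) + - A / (1 + u) * (1 / n))
      = - (c * A) * (1 / (1 - u) + 1 / (1 + u)) / n" for c A u :: real
    by (simp add: divide_inverse algebra_simps)
  then have "(n / 2) ^ q * (- ((x / n) ^ Suc q) / (1 - x / n) * (1 / n)
           + (-1) ^ q * (- ((- (x / n)) ^ Suc q) / (1 - - (x / n)) * (- 1 / n)))
      = - ((n / 2) ^ q * (x / n) ^ Suc q) * (1 / (1 - x / n) + 1 / (1 + x / n)) / n"
    by (simp only: odd_part)
  also have "(n / 2) ^ q * (x / n) ^ Suc q = (x / 2) ^ q * (x / n)"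
    using assms by (simp add: power_mult_distrib[symmetric])
  also have "1 / (1 - x / n) + 1 / (1 + x / n) = 2 * n\<^sup>2 / (n\<^sup>2 - x\<^sup>2)"
    using assms \<open>n - x \<noteq> 0\<close> \<open>n + x \<noteq> 0\<close> by (simp add: field_simps power2_eq_square)
  also have "- (c * (x / n)) * (2 * n\<^sup>2 / (n\<^sup>2 - x\<^sup>2)) / n = c * (- 2 * x / (n\<^sup>2 - x\<^sup>2))"
    for c using assms \<open>n\<^sup>2 - x\<^sup>2 \<noteq> 0\<close> by (simp add: field_simps power2_eq_square)
  finally show ?thesis .
qed

definition log_mcos_term :: "nat \<Rightarrow> real \<Rightarrow> nat \<Rightarrow> real" where
  "log_mcos_term r x k = ((2 * real k + 1) / 2) ^ (r - 1) *
     (logP r (x / (2 * real k + 1)) + (-1) ^ (r - 1) * logP r (- x / (2 * real k + 1)))"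

lemma mcos_factor_eq_exp:
  fixes x :: real assumes "\<bar>x\<bar> < 1"
  shows "(let h = (2 * real k + 1) / 2 in
      (P r ((x / 2) / h) * P r (- (x / 2) / h) powi ((-1) ^ (r - 1))) powr (h ^ (r - 1)))
    = exp (log_mcos_term r x k)"
proof -
  define n where "n = 2 * real k + 1"
  have "n \<ge> 1" by (simp add: n_def)
  then have div: "(x / 2) / (n / 2) = x / n" "- (x / 2) / (n / 2) = - (x / n)"
    and "x / n < 1" "- (x / n) < 1"
    using assms by (auto simp: field_simps abs_less_iff)
  then have pos: "P r (x / n) > 0" "P r (- (x / n)) > 0" by (simp_all add: P_def)
  have "P r (- (x / n)) powi ((-1) ^ (r - 1)) = exp ((-1) ^ (r - 1) * logP r (- (x / n)))"
    using pos ln_P[OF \<open>- (x / n) < 1\<close>, symmetric]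
    by (cases "even (r - 1)") (simp_all add: exp_minus)
  then have "ln (P r (x / n) * P r (- (x / n)) powi ((-1) ^ (r - 1)))
      = logP r (x / n) + (-1) ^ (r - 1) * logP r (- (x / n))"
    using pos by (simp add: ln_mult ln_P[OF \<open>x / n < 1\<close>])
  then show ?thesis
    unfolding Let_def log_mcos_term_def n_def[symmetric] div
    using pos by (simp add: powr_def mult.commute)
qed

lemma log_mcos_term_deriv:
  fixes x :: real assumes "\<bar>x\<bar> < 1" "r \<ge> 1"
  shows "((\<lambda>y. log_mcos_term r y k) has_field_derivative
           (x / 2) ^ (r - 1) * (- 2 * x / ((2 * real k + 1)\<^sup>2 - x\<^sup>2))) (at x)"
proof -
  define n where "n = 2 * real k + 1"
  obtain q where r: "r = Suc q" using assms(2) by (cases r) auto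
  have "n > 0" "\<bar>x\<bar> < n" using assms by (auto simp: n_def)
  then have "x / n < 1" "- (x / n) < 1" by (auto simp: field_simps abs_less_iff)
  have "((\<lambda>y. logP r (y / n)) has_field_derivative - ((x / n) ^ Suc q) / (1 - x / n) * (1 / n)) (at x)"
    unfolding r by (rule DERIV_chain2[where g = "\<lambda>y. y / n", OF logP_deriv[OF \<open>x / n < 1\<close>]])
      (use \<open>n > 0\<close> in \<open>auto intro!: derivative_eq_intros\<close>)
  moreover have "((\<lambda>y. logP r (- (y / n))) has_field_derivative
      - ((- (x / n)) ^ Suc q) / (1 - - (x / n)) * (- 1 / n)) (at x)"
    unfolding r by (rule DERIV_chain2[where g = "\<lambda>y. - (y / n)", OF logP_deriv[OF \<open>- (x / n) < 1\<close>]])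
      (use \<open>n > 0\<close> in \<open>auto intro!: derivative_eq_intros\<close>)
  ultimately have "((\<lambda>y. (n / 2) ^ q * (logP r (y / n) + (-1) ^ q * logP r (- (y / n)))) has_field_derivative
      (n / 2) ^ q * (- ((x / n) ^ Suc q) / (1 - x / n) * (1 / n)
        + (-1) ^ q * (- ((- (x / n)) ^ Suc q) / (1 - - (x / n)) * (- 1 / n)))) (at x)"
    by (intro DERIV_cmult DERIV_add)
  moreover have "(\<lambda>y. log_mcos_term r y k) = (\<lambda>y. (n / 2) ^ q * (logP r (y / n) + (-1) ^ q * logP r (- (y / n))))"
    by (simp add: fun_eq_iff log_mcos_term_def n_def r)
  ultimately show ?thesis
    unfolding logP_pair_deriv_eq[OF \<open>n > 0\<close> \<open>\<bar>x\<bar> < n\<close>] by (simp add: n_def r)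
qed

lemma log_mcos_term_zero: "log_mcos_term r 0 k = 0"
proof -
  have "(\<Sum>i=1..r. (0::real) ^ i / real i) = 0" by (rule sum.neutral) auto
  then show ?thesis by (simp add: log_mcos_term_def logP_def)
qed

definition log_mcos :: "nat \<Rightarrow> real \<Rightarrow> real" where
  "log_mcos r x = (\<Sum>k. log_mcos_term r x k)"

lemma log_mcos_deriv:
  fixes x :: real assumes "\<bar>x\<bar> < 1" "r \<ge> 1"
  shows "summable (log_mcos_term r x)"
    and "(log_mcos r has_field_derivative (x / 2) ^ (r - 1) * (- (pi / 2) * tan (pi * x / 2))) (at x)"
proof -
  define a where "a = (1 + \<bar>x\<bar>) / 2"
  define U where "U = {-a<..<a}"
  have "a < 1" "x \<in> U" "0 \<in> U" "convex U" "open U"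
    using assms by (auto simp: a_def U_def abs_if field_simps)
  have bound: "\<bar>(y / 2) ^ (r - 1) * (- 2 * y / ((2 * real k + 1)\<^sup>2 - y\<^sup>2))\<bar>
      \<le> 2 / (1 - a\<^sup>2) / real (Suc k) ^ 2" if "y \<in> U" for k y
  proof -
    have "\<bar>(y / 2) ^ (r - 1)\<bar> \<le> 1"
      using that \<open>a < 1\<close> by (auto simp: U_def power_abs intro!: power_le_one)
    moreover have "\<bar>- 2 * y / ((2 * real k + 1)\<^sup>2 - y\<^sup>2)\<bar> \<le> 2 / (1 - a\<^sup>2) / real (Suc k) ^ 2"
      using that \<open>a < 1\<close> by (intro partial_fraction_term_bound) (auto simp: U_def)
    ultimately show ?thesis unfolding abs_mult using mult_mono[of _ 1] by fastforce
  qed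
  have bound_summable: "summable (\<lambda>k. 2 / (1 - a\<^sup>2) / real (Suc k) ^ 2)"
    by (rule summable_bounded_over_Suc_power) auto
  have term_deriv: "((\<lambda>y. log_mcos_term r y k) has_field_derivative
      (y / 2) ^ (r - 1) * (- 2 * y / ((2 * real k + 1)\<^sup>2 - y\<^sup>2))) (at y)" if "y \<in> U" for k y
    using that \<open>a < 1\<close> assms(2) by (intro log_mcos_term_deriv) (auto simp: U_def)
  have "summable (\<lambda>k. log_mcos_term r 0 k)" by (simp add: log_mcos_term_zero)
  note Mtest = has_field_derivative_series_Mtest[OF \<open>convex U\<close> \<open>open U\<close> \<open>0 \<in> U\<close>
      this term_deriv bound bound_summable \<open>x \<in> U\<close>]
  from Mtest(1) have "summable (\<lambda>k. log_mcos_term r x k)" .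
  moreover from Mtest(2) have "(log_mcos r has_field_derivative
      (\<Sum>k. (x / 2) ^ (r - 1) * (- 2 * x / ((2 * real k + 1)\<^sup>2 - x\<^sup>2)))) (at x)"
    unfolding log_mcos_def[abs_def] .
  ultimately show "summable (log_mcos_term r x)"
    and "(log_mcos r has_field_derivative (x / 2) ^ (r - 1) * (- (pi / 2) * tan (pi * x / 2))) (at x)"
    using sums_unique[OF sums_mult[OF sums_tan_partial_fractions[OF assms(1)]]] by simp_all
qed

lemma mcos_eq_exp_log_mcos:
  fixes x :: real assumes "\<bar>x\<bar> < 1" "r \<ge> 1"
  shows "mcos r (x / 2) = exp (log_mcos r x)"
  unfolding mcos_def log_mcos_def mcos_factor_eq_exp[OF assms(1)]
  by (rule prodinf_exp[OF log_mcos_deriv(1)[OF assms]])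

lemma log_mcos_2:
  fixes x :: real assumes "\<bar>x\<bar> < 1"
  shows "log_mcos 2 x = x / 2 * ln (2 * cos (pi * x / 2)) + 1 / (2 * pi) * alt_sin_series 2 x"
proof (rule eq_on_unit_interval_if_same_deriv[OF _ _ _ assms])
  fix y :: real assume "\<bar>y\<bar> < 1"
  show "(log_mcos 2 has_field_derivative (y / 2) * (- (pi / 2) * tan (pi * y / 2))) (at y)"
    using log_mcos_deriv(2)[OF \<open>\<bar>y\<bar> < 1\<close>, of 2] by simp
  show "((\<lambda>x. x / 2 * ln (2 * cos (pi * x / 2)) + 1 / (2 * pi) * alt_sin_series 2 x)
      has_field_derivative (y / 2) * (- (pi / 2) * tan (pi * y / 2))) (at y)"
    using cos_pi_half_pos[OF \<open>\<bar>y\<bar> < 1\<close>]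
    by (auto intro!: derivative_eq_intros alt_sin_series_2_deriv[OF \<open>\<bar>y\<bar> < 1\<close>]
        simp: tan_def field_simps)
qed (simp add: log_mcos_def log_mcos_term_zero alt_sin_series_zero)

lemma log_mcos_3:
  fixes x :: real assumes "\<bar>x\<bar> < 1"
  shows "log_mcos 3 x = (x / 2) ^ 2 * ln (2 * cos (pi * x / 2)) +
    (1 / (2 * pi ^ 2) * alt_cos_series 3 x + x / (2 * pi) * alt_sin_series 2 x + 1 / (2 * pi ^ 2) * zetaE 3)"
proof (rule eq_on_unit_interval_if_same_deriv[OF _ _ _ assms])
  fix y :: real assume "\<bar>y\<bar> < 1"
  show "(log_mcos 3 has_field_derivative (y / 2) ^ 2 * (- (pi / 2) * tan (pi * y / 2))) (at y)"
    using log_mcos_deriv(2)[OF \<open>\<bar>y\<bar> < 1\<close>, of 3] by simp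
  show "((\<lambda>x. (x / 2) ^ 2 * ln (2 * cos (pi * x / 2)) +
    (1 / (2 * pi ^ 2) * alt_cos_series 3 x + x / (2 * pi) * alt_sin_series 2 x + 1 / (2 * pi ^ 2) * zetaE 3))
      has_field_derivative (y / 2) ^ 2 * (- (pi / 2) * tan (pi * y / 2))) (at y)"
    using cos_pi_half_pos[OF \<open>\<bar>y\<bar> < 1\<close>] alt_cos_series_deriv[of 2 y]
    by (auto intro!: derivative_eq_intros alt_sin_series_2_deriv[OF \<open>\<bar>y\<bar> < 1\<close>]
        simp: tan_def field_simps power2_eq_square numeral_3_eq_3)
qed (simp add: log_mcos_def log_mcos_term_zero alt_sin_series_zero alt_cos_series_zero)

lemma log_mcos_4:
  fixes x :: real assumes "\<bar>x\<bar> < 1"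
  shows "log_mcos 4 x = (x / 2) ^ 3 * ln (2 * cos (pi * x / 2)) +
    (3 * x / (4 * pi ^ 2) * alt_cos_series 3 x - 3 / (4 * pi ^ 3) * alt_sin_series 4 x
      + 3 * x ^ 2 / (8 * pi) * alt_sin_series 2 x)"
proof (rule eq_on_unit_interval_if_same_deriv[OF _ _ _ assms])
  fix y :: real assume "\<bar>y\<bar> < 1"
  show "(log_mcos 4 has_field_derivative (y / 2) ^ 3 * (- (pi / 2) * tan (pi * y / 2))) (at y)"
    using log_mcos_deriv(2)[OF \<open>\<bar>y\<bar> < 1\<close>, of 4] by simp
  have "(alt_cos_series 3 has_field_derivative - pi * alt_sin_series 2 y) (at y)"
    "(alt_sin_series 4 has_field_derivative pi * alt_cos_series 3 y) (at y)"
    using alt_cos_series_deriv[of 2 y] alt_sin_series_deriv[of 3 y] by (simp_all add: eval_nat_numeral)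
  then show "((\<lambda>x. (x / 2) ^ 3 * ln (2 * cos (pi * x / 2)) +
    (3 * x / (4 * pi ^ 2) * alt_cos_series 3 x - 3 / (4 * pi ^ 3) * alt_sin_series 4 x
      + 3 * x ^ 2 / (8 * pi) * alt_sin_series 2 x))
      has_field_derivative (y / 2) ^ 3 * (- (pi / 2) * tan (pi * y / 2))) (at y)"
    using cos_pi_half_pos[OF \<open>\<bar>y\<bar> < 1\<close>]
    by (auto intro!: derivative_eq_intros alt_sin_series_2_deriv[OF \<open>\<bar>y\<bar> < 1\<close>]
        simp: tan_def field_simps power2_eq_square power3_eq_cube power4_eq_xxxx)
qed (simp add: log_mcos_def log_mcos_term_zero alt_sin_series_zero)

lemma log_mcos_5:
  fixes x :: real assumes "\<bar>x\<bar> < 1"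
  shows "log_mcos 5 x = (x / 2) ^ 4 * ln (2 * cos (pi * x / 2)) +
    (- 3 / (2 * pi ^ 4) * alt_cos_series 5 x + 3 * x ^ 2 / (4 * pi ^ 2) * alt_cos_series 3 x
      - 3 * x / (2 * pi ^ 3) * alt_sin_series 4 x + x ^ 3 / (4 * pi) * alt_sin_series 2 x
      - 3 / (2 * pi ^ 4) * zetaE 5)"
proof (rule eq_on_unit_interval_if_same_deriv[OF _ _ _ assms])
  fix y :: real assume "\<bar>y\<bar> < 1"
  show "(log_mcos 5 has_field_derivative (y / 2) ^ 4 * (- (pi / 2) * tan (pi * y / 2))) (at y)"
    using log_mcos_deriv(2)[OF \<open>\<bar>y\<bar> < 1\<close>, of 5] by simp
  have "(alt_cos_series 3 has_field_derivative - pi * alt_sin_series 2 y) (at y)"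
    "(alt_sin_series 4 has_field_derivative pi * alt_cos_series 3 y) (at y)"
    "(alt_cos_series 5 has_field_derivative - pi * alt_sin_series 4 y) (at y)"
    using alt_cos_series_deriv[of 2 y] alt_sin_series_deriv[of 3 y] alt_cos_series_deriv[of 4 y]
    by (simp_all add: eval_nat_numeral)
  then show "((\<lambda>x. (x / 2) ^ 4 * ln (2 * cos (pi * x / 2)) +
    (- 3 / (2 * pi ^ 4) * alt_cos_series 5 x + 3 * x ^ 2 / (4 * pi ^ 2) * alt_cos_series 3 x
      - 3 * x / (2 * pi ^ 3) * alt_sin_series 4 x + x ^ 3 / (4 * pi) * alt_sin_series 2 x
      - 3 / (2 * pi ^ 4) * zetaE 5))
      has_field_derivative (y / 2) ^ 4 * (- (pi / 2) * tan (pi * y / 2))) (at y)"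
    using cos_pi_half_pos[OF \<open>\<bar>y\<bar> < 1\<close>]
    by (auto intro!: derivative_eq_intros alt_sin_series_2_deriv[OF \<open>\<bar>y\<bar> < 1\<close>]
        simp: tan_def field_simps power2_eq_square power3_eq_cube power4_eq_xxxx)
qed (simp add: log_mcos_def log_mcos_term_zero alt_sin_series_zero alt_cos_series_zero)

theorem corollary2p13:
  fixes x :: real
  assumes "0 \<le> x" and "x < 1"
  defines "S2 \<equiv> (\<Sum>n. (-1) ^ Suc n * sin (pi * real (Suc n) * x) / real (Suc n) ^ 2)"
      and "S4 \<equiv> (\<Sum>n. (-1) ^ Suc n * sin (pi * real (Suc n) * x) / real (Suc n) ^ 4)"
      and "C3 \<equiv> (\<Sum>n. (-1) ^ Suc n * cos (pi * real (Suc n) * x) / real (Suc n) ^ 3)"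
      and "C5 \<equiv> (\<Sum>n. (-1) ^ Suc n * cos (pi * real (Suc n) * x) / real (Suc n) ^ 5)"
  shows "mcos 2 (x / 2) = (2 * cos (pi * x / 2)) powr (x / 2) * exp (1 / (2 * pi) * S2) \<and>
         mcos 3 (x / 2) = (2 * cos (pi * x / 2)) powr ((x / 2) ^ 2) *
           exp (1 / (2 * pi ^ 2) * C3 + x / (2 * pi) * S2 + 1 / (2 * pi ^ 2) * zetaE 3) \<and>
         mcos 4 (x / 2) = (2 * cos (pi * x / 2)) powr ((x / 2) ^ 3) *
           exp (3 * x / (4 * pi ^ 2) * C3 - 3 / (4 * pi ^ 3) * S4 + 3 * x ^ 2 / (8 * pi) * S2) \<and>
         mcos 5 (x / 2) = (2 * cos (pi * x / 2)) powr ((x / 2) ^ 4) *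
           exp (- 3 / (2 * pi ^ 4) * C5 + 3 * x ^ 2 / (4 * pi ^ 2) * C3 - 3 * x / (2 * pi ^ 3) * S4
                + x ^ 3 / (4 * pi) * S2 - 3 / (2 * pi ^ 4) * zetaE 5)"
proof -
  have "\<bar>x\<bar> < 1" using assms(1,2) by simp
  have mcos_eq: "mcos r (x / 2) = exp (log_mcos r x)" if "r \<ge> 1" for r
    by (rule mcos_eq_exp_log_mcos[OF \<open>\<bar>x\<bar> < 1\<close> that])
  have split_exp: "exp (c * ln (2 * cos (pi * x / 2)) + R) = (2 * cos (pi * x / 2)) powr c * exp R"
    for c R using cos_pi_half_pos[OF \<open>\<bar>x\<bar> < 1\<close>] by (simp add: powr_def exp_add)
  show ?thesis
    unfolding S2_def S4_def C3_def C5_def alt_sin_series_def[symmetric] alt_cos_series_def[symmetric]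
      mcos_eq[OF one_le_numeral] log_mcos_2[OF \<open>\<bar>x\<bar> < 1\<close>] log_mcos_3[OF \<open>\<bar>x\<bar> < 1\<close>]
      log_mcos_4[OF \<open>\<bar>x\<bar> < 1\<close>] log_mcos_5[OF \<open>\<bar>x\<bar> < 1\<close>] split_exp
    by (intro conjI refl)
qed

end
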